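(* There exist vectors $\{\phi_i\}_{i=1}^5$ in $\mathbb R^3$ which do phase retrieval, but such that the hyperplanes $\{\phi_i^\perp\}_{i=1}^5$ do not do norm retrieval.
   Context: A family of vectors $\{\phi_i\}$ in $\mathbb R^d$ does phase retrieval if $|\langle x,\phi_i\rangle|=|\langle y,\phi_i\rangle|$ for all $i$ implies $x=\pm y$. A family of subspaces $\{W_i\}$ with orthogonal projections $P_i$ does norm retrieval if $\|P_ix\|=\|P_iy\|$ for all $i$ implies $\|x\|=\|y\|$. Here $\phi_i^\perp=\{x\in\mathbb R^3:\langle x,\phi_i\rangle=0\}$. *)

theory Defs
  imports "HOL-Analysis.Analysis"
begin

definition phase_retrieval :: "'i set \<Rightarrow> ('i \<Rightarrow> 'a::real_inner) \<Rightarrow> bool" where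
  "phase_retrieval I \<phi> \<longleftrightarrow>
     (\<forall>x y. (\<forall>i\<in>I. \<bar>x \<bullet> \<phi> i\<bar> = \<bar>y \<bullet> \<phi> i\<bar>) \<longrightarrow> (x = y \<or> x = - y))"

definition is_orth_proj :: "'a::real_inner set \<Rightarrow> ('a \<Rightarrow> 'a) \<Rightarrow> bool" where
  "is_orth_proj W P \<longleftrightarrow> (\<forall>x. P x \<in> W \<and> (\<forall>w\<in>W. (x - P x) \<bullet> w = 0))"

definition norm_retrieval :: "'i set \<Rightarrow> ('i \<Rightarrow> 'a::real_inner set) \<Rightarrow> bool" where
  "norm_retrieval I W \<longleftrightarrow>
     (\<forall>P. (\<forall>i\<in>I. is_orth_proj (W i) (P i)) \<longrightarrow>
        (\<forall>x y. (\<forall>i\<in>I. norm (P i x) = norm (P i y)) \<longrightarrow> norm x = norm y))"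

definition perp :: "'a::real_inner \<Rightarrow> 'a set" where
  "perp v = {x. x \<bullet> v = 0}"

end

theory Submission
  imports Defs
begin

text \<open>
  For a hyperplane \<open>\<phi>\<^sup>\<perp>\<close> the projection satisfies
  \<open>\<parallel>P x\<parallel>\<^sup>2 = \<parallel>x\<parallel>\<^sup>2 - \<langle>x,\<phi>\<rangle>\<^sup>2 / \<parallel>\<phi>\<parallel>\<^sup>2\<close>, so two vectors \<open>x, y\<close> with
  \<open>\<langle>x,\<phi>\<^sub>i\<rangle>\<^sup>2 - \<langle>y,\<phi>\<^sub>i\<rangle>\<^sup>2 = (\<parallel>x\<parallel>\<^sup>2 - \<parallel>y\<parallel>\<^sup>2) \<parallel>\<phi>\<^sub>i\<parallel>\<^sup>2\<close> for all \<open>i\<close> have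
  projections of equal length. For \<open>x = e\<^sub>3\<close> and \<open>y = 2 e\<^sub>1\<close> this condition says
  that \<open>\<phi>\<^sub>i = (a, b, c)\<close> lies on the quadric cone \<open>a\<^sup>2 = 3 b\<^sup>2 + 4 c\<^sup>2\<close>. Five
  vectors on that cone can still be chosen in general enough position to do
  phase retrieval, which is checked by case analysis on the signs.
\<close>

lemma is_orth_proj_perp:
  fixes \<phi> :: "'a::real_inner"
  assumes "\<phi> \<noteq> 0"
  shows "is_orth_proj (perp \<phi>) (\<lambda>v. v - ((v \<bullet> \<phi>) / (\<phi> \<bullet> \<phi>)) *\<^sub>R \<phi>)"
  using assms
  by (auto simp: is_orth_proj_def perp_def inner_diff_left inner_diff_right inner_commute)

lemma norm_proj_perp_power2:
  fixes \<phi> v :: "'a::real_inner"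
  assumes "\<phi> \<noteq> 0"
  shows "(norm (v - ((v \<bullet> \<phi>) / (\<phi> \<bullet> \<phi>)) *\<^sub>R \<phi>))\<^sup>2 = (norm v)\<^sup>2 - (v \<bullet> \<phi>)\<^sup>2 / (\<phi> \<bullet> \<phi>)"
  using assms unfolding power2_norm_eq_inner
  by (simp add: inner_diff_left inner_diff_right inner_commute power2_eq_square field_simps)

lemma not_norm_retrieval_perp:
  fixes \<phi> :: "'i \<Rightarrow> 'a::real_inner"
  assumes nonzero: "\<And>i. i \<in> I \<Longrightarrow> \<phi> i \<noteq> 0"
    and balanced: "\<And>i. i \<in> I \<Longrightarrow>
      (x \<bullet> \<phi> i)\<^sup>2 - (y \<bullet> \<phi> i)\<^sup>2 = ((norm x)\<^sup>2 - (norm y)\<^sup>2) * (\<phi> i \<bullet> \<phi> i)"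
    and "norm x \<noteq> norm y"
  shows "\<not> norm_retrieval I (\<lambda>i. perp (\<phi> i))"
proof
  define P where "P i = (\<lambda>v. v - ((v \<bullet> \<phi> i) / (\<phi> i \<bullet> \<phi> i)) *\<^sub>R \<phi> i)" for i
  assume "norm_retrieval I (\<lambda>i. perp (\<phi> i))"
  moreover have "\<forall>i\<in>I. is_orth_proj (perp (\<phi> i)) (P i)"
    by (simp add: P_def is_orth_proj_perp nonzero)
  moreover have "\<forall>i\<in>I. norm (P i x) = norm (P i y)"
  proof
    fix i assume "i \<in> I"
    then have "\<phi> i \<bullet> \<phi> i \<noteq> 0" and "(norm (P i x))\<^sup>2 = (norm (P i y))\<^sup>2"
      using nonzero[of i] balanced[of i]
      by (simp_all add: P_def norm_proj_perp_power2 field_simps)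
    then show "norm (P i x) = norm (P i y)"
      by (simp add: power2_eq_iff_nonneg)
  qed
  ultimately have "norm x = norm y"
    unfolding norm_retrieval_def by blast
  with \<open>norm x \<noteq> norm y\<close> show False ..
qed

lemma inner_vec3: "(u::real^3) \<bullet> v = u$1 * v$1 + u$2 * v$2 + u$3 * v$3"
  by (simp add: inner_vec_def sum_3)

definition cone_frame :: "nat \<Rightarrow> real^3" where
  "cone_frame i =
     (if i = 1 then vector [2, 0, 1] else if i = 2 then vector [2, 0, -1]
      else if i = 3 then vector [4, 2, 1] else if i = 4 then vector [4, -2, 1]
      else vector [4, 2, -1])"

lemma cone_frame_on_cone:
  "(cone_frame i $ 1)\<^sup>2 = 3 * (cone_frame i $ 2)\<^sup>2 + 4 * (cone_frame i $ 3)\<^sup>2"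
  by (simp add: cone_frame_def)

lemma cone_frame_nonzero: "cone_frame i \<noteq> 0"
proof
  assume "cone_frame i = 0"
  then have "cone_frame i $ 1 = 0" by simp
  then show False by (simp add: cone_frame_def split: if_splits)
qed

lemma cone_frame_abs_determines_sign:
  fixes a b c p q r :: real
  assumes "\<bar>2*a + c\<bar> = \<bar>2*p + r\<bar>" "\<bar>2*a - c\<bar> = \<bar>2*p - r\<bar>"
    "\<bar>4*a + 2*b + c\<bar> = \<bar>4*p + 2*q + r\<bar>" "\<bar>4*a - 2*b + c\<bar> = \<bar>4*p - 2*q + r\<bar>"
    "\<bar>4*a + 2*b - c\<bar> = \<bar>4*p + 2*q - r\<bar>"
  shows "(a = p \<and> b = q \<and> c = r) \<or> (a = -p \<and> b = -q \<and> c = -r)"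
  using assms unfolding abs_eq_iff by (elim disjE) linarith+

lemma phase_retrieval_cone_frame: "phase_retrieval {1..5} cone_frame"
  unfolding phase_retrieval_def
proof (intro allI impI)
  fix x y :: "real^3"
  assume "\<forall>i\<in>{1..5}. \<bar>x \<bullet> cone_frame i\<bar> = \<bar>y \<bullet> cone_frame i\<bar>"
  then have "\<bar>x \<bullet> cone_frame i\<bar> = \<bar>y \<bullet> cone_frame i\<bar>" if "i \<in> {1, 2, 3, 4, 5}" for i
    using that by auto
  note eqs = this[of 1] this[of 2] this[of 3] this[of 4] this[of 5]
  have "(x$1 = y$1 \<and> x$2 = y$2 \<and> x$3 = y$3) \<or> (x$1 = -(y$1) \<and> x$2 = -(y$2) \<and> x$3 = -(y$3))"
    by (rule cone_frame_abs_determines_sign)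
      (use eqs in \<open>simp_all add: cone_frame_def inner_vec3 algebra_simps\<close>)
  then show "x = y \<or> x = - y"
    by (auto simp: vec_eq_iff forall_3)
qed

lemma not_norm_retrieval_cone_frame: "\<not> norm_retrieval {1..5} (\<lambda>i. perp (cone_frame i))"
proof (rule not_norm_retrieval_perp[where x = "vector [0, 0, 1]" and y = "vector [2, 0, 0]"])
  show "cone_frame i \<noteq> 0" for i
    by (rule cone_frame_nonzero)
  show "(vector [0, 0, 1] \<bullet> cone_frame i)\<^sup>2 - (vector [2, 0, 0] \<bullet> cone_frame i)\<^sup>2 =
      ((norm (vector [0, 0, 1] :: real^3))\<^sup>2 - (norm (vector [2, 0, 0] :: real^3))\<^sup>2) *
      (cone_frame i \<bullet> cone_frame i)" for i
    using cone_frame_on_cone[of i] unfolding power2_norm_eq_inner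
    by (simp add: inner_vec3 power2_eq_square algebra_simps)
  show "norm (vector [0, 0, 1] :: real^3) \<noteq> norm (vector [2, 0, 0] :: real^3)"
    by (simp add: norm_eq_sqrt_inner inner_vec3)
qed

theorem mainTheorem5:
  shows "\<exists>\<phi> :: nat \<Rightarrow> real^3.
           phase_retrieval {1..5} \<phi> \<and>
           \<not> norm_retrieval {1..5} (\<lambda>i. perp (\<phi> i))"
  using phase_retrieval_cone_frame not_norm_retrieval_cone_frame by blast

end
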